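(* Let $P,Q,R\in D$ be non-collinear and let $m\in\mathbb{Z}_{\ge0}$ be the number of triangles inscribed in $S^1$ and circumscribing $\triangle PQR$. Then $$m=\begin{cases}0 & \text{if } \delta(P,Q,R)<\Delta'(P,Q),\\ 1 & \text{if } \delta(P,Q,R)=\Delta'(P,Q),\\ 2 & \text{if } \delta(P,Q,R)>\Delta'(P,Q).\end{cases}$$
   Context: $D=\{(x,y)\in\mathbb{R}^2: x^2+y^2<1\}$ (Beltrami–Klein disk), $S^1$ its boundary circle. Let $D_P$ be the unit disk with Poincaré distance $d(P,Q)=\operatorname{arccosh}\left(1+\frac{2|P-Q|^2}{(1-|P|^2)(1-|Q|^2)}\right)$, and $G:D_P\to D$, $G(x,y)=\left(\frac{2x}{1+x^2+y^2},\frac{2y}{1+x^2+y^2}\right)$, with inverse $G^{-1}(x,y)=\left(\frac{x}{1+\sqrt{1-x^2-y^2}},\frac{y}{1+\sqrt{1-x^2-y^2}}\right)$. For $P,Q\in D$, $d'(P,Q):=d(G^{-1}(P),G^{-1}(Q))$; equivalently, if $v_1,v_2\in S^1$ are the endpoints of the chord through $P,Q$, $d'(P,Q)=\frac12\left|\log\frac{|v_1Q||v_2P|}{|v_1P||v_2Q|}\right|$. For $P\ne Q$, $\Delta'(P,Q):=\log\frac{e^{d'(P,Q)}+1}{e^{d'(P,Q)}-1}$. $\delta(P,Q,R)$ is the minimum of $d'(R,S)$ over points $S\in D$ on the straight line through $P$ and $Q$. A triangle inscribed in $S^1$ and circumscribing $\triangle PQR$ is a Euclidean triangle with three distinct vertices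 on $S^1$ such that $P$, $Q$, $R$ lie on three distinct sides of it (one point on each side). *)

theory Defs
  imports "HOL-Analysis.Analysis"
begin

definition klein_disk :: "complex set" where
  "klein_disk = {z. cmod z < 1}"

definition circle_S1 :: "complex set" where
  "circle_S1 = {z. cmod z = 1}"

definition poincare_dist :: "complex \<Rightarrow> complex \<Rightarrow> real" where
  "poincare_dist P Q = arcosh (1 + 2 * (cmod (P - Q))\<^sup>2 / ((1 - (cmod P)\<^sup>2) * (1 - (cmod Q)\<^sup>2)))"

text \<open>Inverse of G : D_P \<rightarrow> D.\<close>
definition G_inv :: "complex \<Rightarrow> complex" where
  "G_inv z = z / complex_of_real (1 + sqrt (1 - (cmod z)\<^sup>2))"

definition klein_dist :: "complex \<Rightarrow> complex \<Rightarrow> real" where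
  "klein_dist P Q = poincare_dist (G_inv P) (G_inv Q)"

definition Delta' :: "complex \<Rightarrow> complex \<Rightarrow> real" where
  "Delta' P Q = ln ((exp (klein_dist P Q) + 1) / (exp (klein_dist P Q) - 1))"

definition delta_dist :: "complex \<Rightarrow> complex \<Rightarrow> complex \<Rightarrow> real" where
  "delta_dist P Q R = Inf {klein_dist R S | S. S \<in> klein_disk \<and> (\<exists>t::real. S = P + t *\<^sub>R (Q - P))}"

definition circumscribing_inscribed_triangles :: "complex \<Rightarrow> complex \<Rightarrow> complex \<Rightarrow> complex set set" where
  "circumscribing_inscribed_triangles P Q R =
    {T. \<exists>a b c. T = {a, b, c} \<and> a \<noteq> b \<and> b \<noteq> c \<and> a \<noteq> c \<and>
        a \<in> circle_S1 \<and> b \<in> circle_S1 \<and> c \<in> circle_S1 \<and>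
        P \<in> closed_segment a b \<and> Q \<in> closed_segment b c \<and> R \<in> closed_segment c a}"

end

theory Submission
  imports Defs
begin

text \<open>For a point \<open>X\<close> of the open disk, the map sending \<open>a \<in> S\<^sup>1\<close> to the other endpoint of
  the chord through \<open>a\<close> and \<open>X\<close> is the involutive Moebius map \<open>a \<mapsto> (X - a) / (1 - conj X a)\<close>.
  An inscribed triangle with \<open>P\<close>, \<open>Q\<close>, \<open>R\<close> on its sides is therefore determined by one vertex
  \<open>a\<close>, which must be a fixed point of the composite of the three chord maps. Clearing
  denominators, the fixed point equation on \<open>S\<^sup>1\<close> is a self-inversive quadratic, i.e. the
  intersection of the circle with a line, and it has 2, 1 or 0 solutions according as
  \<open>A\<^sup>2\<close> is greater than, equal to or less than \<open>D = (1 - |P|\<^sup>2)(1 - |Q|\<^sup>2)(1 - |R|\<^sup>2)\<close>,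
  where \<open>A\<close> is twice the signed area of \<open>PQR\<close>.

  On the hyperbolic side, \<open>cosh d'(P, Q) = (1 - P\<cdot>Q) / sqrt ((1 - |P|\<^sup>2)(1 - |Q|\<^sup>2))\<close>.
  Minimising \<open>cosh\<^sup>2 d'(R, S)\<close> over \<open>S\<close> on the line \<open>PQ\<close> (a ratio of two quadratics in the
  line parameter) gives \<open>cosh\<^sup>2 \<delta> = 1 + A\<^sup>2 / ((1 - |R|\<^sup>2) K)\<close> with
  \<open>K = (1 - P\<cdot>Q)\<^sup>2 - (1 - |P|\<^sup>2)(1 - |Q|\<^sup>2)\<close>, while \<open>\<Delta>' = ln coth (d'/2)\<close> has
  \<open>cosh \<Delta>' = coth d'\<close>, so \<open>cosh\<^sup>2 \<Delta>' = (1 - P\<cdot>Q)\<^sup>2 / K\<close>. Comparing the two yields exactly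
  the comparison of \<open>A\<^sup>2\<close> with \<open>D\<close>.\<close>

lemma cmod_less_1_iff: "cmod z < 1 \<longleftrightarrow> (Re z)\<^sup>2 + (Im z)\<^sup>2 < 1"
  by (simp add: cmod_def)

lemma cmod_sq_less_1: "cmod z < 1 \<Longrightarrow> (cmod z)\<^sup>2 < 1"
  by (simp add: power_less_one_iff abs_less_iff)

lemma cmod_eq_1_imp_mult_cnj: "cmod z = 1 \<Longrightarrow> z * cnj z = 1"
  by (simp add: complex_mult_cnj cmod_def power2_eq_square)

lemma inner_less_1:
  fixes x y :: complex
  assumes "norm x < 1" "norm y \<le> 1"
  shows "x \<bullet> y < 1"
  using norm_cauchy_schwarz[of x y] assms mult_less_le_imp_less[of "norm x" 1 "norm y" 1]
  by (cases "norm y = 0") (auto simp: mult_left_le)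

lemma Re_cnj_mult_less_1: "cmod X < 1 \<Longrightarrow> cmod z \<le> 1 \<Longrightarrow> Re (cnj X * z) < 1"
  using inner_less_1[of X z] by (simp add: inner_complex_def)

section \<open>Inscribed triangles and chord involutions\<close>

text \<open>For \<open>cmod a = 1\<close> and \<open>cmod X < 1\<close>, \<open>chord_end X a\<close> is the other endpoint of the chord of
  the unit circle from \<open>a\<close> through \<open>X\<close> (lemma \<open>mem_closed_segment_iff_chord_end\<close>).\<close>
definition chord_end :: "complex \<Rightarrow> complex \<Rightarrow> complex" where
  "chord_end X z = (X - z) / (1 - cnj X * z)"

lemma chord_end_denom_nonzero:
  assumes "cmod z = 1" "cmod X < 1"
  shows "1 - cnj X * z \<noteq> 0"
proof
  assume "1 - cnj X * z = 0"
  then have "Re (cnj X * z) = 1" by (metis eq_iff_diff_eq_0 one_complex.sel(1))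
  with Re_cnj_mult_less_1[OF assms(2), of z] assms(1) show False by simp
qed

lemma norm_chord_end:
  assumes z: "cmod z = 1" and X: "cmod X < 1"
  shows "cmod (chord_end X z) = 1"
proof -
  have "1 - cnj X * z = z * cnj (z - X)"
    using cmod_eq_1_imp_mult_cnj[OF z] by (simp add: algebra_simps)
  then have "cmod (1 - cnj X * z) = cmod (X - z)"
    using z by (simp add: norm_mult) (metis complex_cnj_diff complex_mod_cnj norm_minus_commute)
  moreover have "X \<noteq> z" using z X by auto
  ultimately show ?thesis
    unfolding chord_end_def using chord_end_denom_nonzero[OF z X] by (simp add: norm_divide)
qed

lemma chord_end_eq_iff:
  assumes "cmod z = 1" "cmod X < 1"
  shows "chord_end X z = w \<longleftrightarrow> w * (1 - cnj X * z) = X - z"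
  unfolding chord_end_def using chord_end_denom_nonzero[OF assms] by (auto simp: field_simps)

lemma chord_end_chord_end:
  assumes z: "cmod z = 1" and X: "cmod X < 1"
  shows "chord_end X (chord_end X z) = z"
proof -
  define w where "w = chord_end X z"
  have "w * (1 - cnj X * z) = X - z"
    using chord_end_eq_iff[OF z X, of w] unfolding w_def by simp
  then have "z * (1 - cnj X * w) = X - w" by (simp add: algebra_simps)
  then show ?thesis
    using chord_end_eq_iff[OF norm_chord_end[OF z X] X] unfolding w_def by simp
qed

lemma chord_end_eq_swap:
  assumes "cmod w = 1" "cmod z = 1" "cmod X < 1"
  shows "chord_end X w = z \<longleftrightarrow> w = chord_end X z"
  using chord_end_chord_end assms by metis

lemma chord_end_inject:
  assumes "cmod w = 1" "cmod z = 1" "cmod X < 1"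
  shows "chord_end X w = chord_end X z \<longleftrightarrow> w = z"
  using chord_end_chord_end assms by metis

lemma chord_end_neq:
  assumes z: "cmod z = 1" and X: "cmod X < 1"
  shows "chord_end X z \<noteq> z"
proof
  assume "chord_end X z = z"
  then have "z * (1 - cnj X * z) = X - z" using chord_end_eq_iff[OF z X] by simp
  then have "(cnj z * z) * (1 - cnj X * z) = cnj z * (X - z)" by (simp add: mult.assoc)
  then have eq: "1 - cnj X * z = X * cnj z - 1"
    using cmod_eq_1_imp_mult_cnj[OF z] by (simp add: algebra_simps)
  have "Re (cnj X * z) = 1" using arg_cong[OF eq, of Re] by simp
  then show False using Re_cnj_mult_less_1[OF X, of z] z by simp
qed

lemma closed_segment_imp_chord_end:
  assumes a: "cmod a = 1" and b: "cmod b = 1" and X: "cmod X < 1"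
    and "X \<in> closed_segment a b"
  shows "b = chord_end X a"
proof -
  obtain u where u: "X = (1 - u) *\<^sub>R a + u *\<^sub>R b"
    using assms(4) unfolding closed_segment_def by auto
  have X_eq: "X = of_real (1 - u) * a + of_real u * b"
    using u by (simp add: scaleR_conv_of_real)
  have "b * (1 - cnj X * a) = b - of_real (1 - u) * (a * cnj a) * b - of_real u * (b * cnj b) * a"
    unfolding X_eq by (simp add: algebra_simps)
  also have "\<dots> = X - a"
    unfolding X_eq cmod_eq_1_imp_mult_cnj[OF a] cmod_eq_1_imp_mult_cnj[OF b] by (simp add: algebra_simps)
  finally show ?thesis using chord_end_eq_iff[OF a X, of b] by simp
qed

lemma chord_end_parameter_identity:
  fixes X a b ca cX :: complex
  assumes "b * (1 - cX * a) = X - a" "a * ca = 1" "1 - cX * a \<noteq> 0"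
  shows "(X - a) * (2 - cX * a - X * ca) = (X - a) * (cX - ca) * (b - a)"
proof -
  have "((X - a) * (2 - cX * a - X * ca)) * (1 - cX * a) = ((X - a) * (cX - ca) * (b - a)) * (1 - cX * a)"
    using assms(1,2) by algebra
  then show ?thesis using assms(3) by simp
qed

lemma in_closed_segment_chord_end:
  assumes a: "cmod a = 1" and X: "cmod X < 1"
  shows "X \<in> closed_segment a (chord_end X a)"
proof -
  define b where "b = chord_end X a"
  \<comment> \<open>\<open>X = a + (N / D) (b - a)\<close>, and \<open>N \<le> D\<close> amounts to \<open>|X| \<le> 1\<close>.\<close>
  define N where "N = (cmod (X - a))\<^sup>2"
  define D where "D = 2 - 2 * Re (cnj X * a)"
  have D_pos: "D > 0" unfolding D_def using Re_cnj_mult_less_1[OF X, of a] a by simp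
  have "complex_of_real N = (X - a) * (cnj X - cnj a)"
    unfolding N_def using complex_norm_square[of "X - a"] by simp
  moreover have "complex_of_real D = 2 - cnj X * a - X * cnj a"
  proof -
    have "complex_of_real (2 * Re (cnj X * a)) = cnj X * a + X * cnj a"
      using complex_add_cnj[of "cnj X * a"] by simp
    then show ?thesis unfolding D_def by simp
  qed
  moreover have "b * (1 - cnj X * a) = X - a"
    using chord_end_eq_iff[OF a X, of b] unfolding b_def by simp
  ultimately have "(X - a) * of_real D = of_real N * (b - a)"
    using chord_end_parameter_identity cmod_eq_1_imp_mult_cnj[OF a] chord_end_denom_nonzero[OF a X]
    by simp
  then have X_eq: "X = (1 - N / D) *\<^sub>R a + (N / D) *\<^sub>R b"
    using D_pos by (simp add: scaleR_conv_of_real field_simps)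
  have "N \<le> D"
  proof -
    have "(Re a)\<^sup>2 + (Im a)\<^sup>2 = 1" "(Re X)\<^sup>2 + (Im X)\<^sup>2 < 1"
      using a X by (simp_all add: cmod_def cmod_less_1_iff)
    then show ?thesis unfolding N_def D_def cmod_power2 by (simp add: power2_diff)
  qed
  then have "0 \<le> N / D" "N / D \<le> 1" using D_pos by (simp_all add: N_def)
  then show ?thesis using X_eq unfolding b_def closed_segment_def by blast
qed

lemma mem_closed_segment_iff_chord_end:
  assumes "cmod a = 1" "cmod b = 1" "cmod X < 1"
  shows "X \<in> closed_segment a b \<longleftrightarrow> b = chord_end X a"
  using closed_segment_imp_chord_end in_closed_segment_chord_end assms by blast

definition closing_vertices :: "complex \<Rightarrow> complex \<Rightarrow> complex \<Rightarrow> complex set" where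
  "closing_vertices P Q R = {a. cmod a = 1 \<and> chord_end R (chord_end Q (chord_end P a)) = a}"

definition chord_triangle :: "complex \<Rightarrow> complex \<Rightarrow> complex \<Rightarrow> complex set" where
  "chord_triangle P Q a = {a, chord_end P a, chord_end Q (chord_end P a)}"

lemma closing_vertex_triangle:
  assumes P: "cmod P < 1" and Q: "cmod Q < 1" and R: "cmod R < 1"
    and "a \<in> closing_vertices P Q R"
  defines "b \<equiv> chord_end P a" and "c \<equiv> chord_end Q (chord_end P a)"
  shows "cmod a = 1" "cmod b = 1" "cmod c = 1" "chord_end R c = a"
    "a \<noteq> b" "b \<noteq> c" "a \<noteq> c"
proof -
  show a: "cmod a = 1" and ca: "chord_end R c = a"
    using assms(4) unfolding closing_vertices_def c_def by auto
  show b: "cmod b = 1" unfolding b_def by (rule norm_chord_end[OF a P])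
  show c: "cmod c = 1" unfolding c_def b_def[symmetric] by (rule norm_chord_end[OF b Q])
  show "a \<noteq> b" "b \<noteq> c" "a \<noteq> c"
    using chord_end_neq[OF a P] chord_end_neq[OF b Q] chord_end_neq[OF c R] ca
    unfolding b_def c_def by metis+
qed

lemma circumscribing_inscribed_triangles_eq:
  assumes P: "cmod P < 1" and Q: "cmod Q < 1" and R: "cmod R < 1"
  shows "circumscribing_inscribed_triangles P Q R = chord_triangle P Q ` closing_vertices P Q R"
proof (intro equalityI subsetI)
  fix T assume "T \<in> circumscribing_inscribed_triangles P Q R"
  then obtain a b c where T: "T = {a, b, c}" and abc: "cmod a = 1" "cmod b = 1" "cmod c = 1"
    and "P \<in> closed_segment a b" "Q \<in> closed_segment b c" "R \<in> closed_segment c a"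
    unfolding circumscribing_inscribed_triangles_def circle_S1_def by blast
  then have "b = chord_end P a" "c = chord_end Q b" "a = chord_end R c"
    using mem_closed_segment_iff_chord_end P Q R by blast+
  then have "a \<in> closing_vertices P Q R" "T = chord_triangle P Q a"
    unfolding closing_vertices_def chord_triangle_def T using abc(1) by auto
  then show "T \<in> chord_triangle P Q ` closing_vertices P Q R" by blast
next
  fix T assume "T \<in> chord_triangle P Q ` closing_vertices P Q R"
  then obtain a where a: "a \<in> closing_vertices P Q R" and T: "T = chord_triangle P Q a"
    by blast
  define b where "b = chord_end P a"
  define c where "c = chord_end Q b"
  note abc = closing_vertex_triangle[OF P Q R a, folded b_def, folded c_def]
  have "P \<in> closed_segment a b" "Q \<in> closed_segment b c" "R \<in> closed_segment c a"
    using mem_closed_segment_iff_chord_end abc P Q R unfolding b_def c_def by metis+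
  moreover have "T = {a, b, c}" unfolding T chord_triangle_def b_def c_def ..
  ultimately show "T \<in> circumscribing_inscribed_triangles P Q R"
    unfolding circumscribing_inscribed_triangles_def circle_S1_def using abc by blast
qed

lemma inj_on_chord_triangle:
  assumes P: "cmod P < 1" and Q: "cmod Q < 1" and R: "cmod R < 1"
  shows "inj_on (chord_triangle P Q) (closing_vertices P Q R)"
proof
  fix a a' assume a: "a \<in> closing_vertices P Q R" and a': "a' \<in> closing_vertices P Q R"
    and eq: "chord_triangle P Q a = chord_triangle P Q a'"
  define b where "b = chord_end P a"
  define c where "c = chord_end Q b"
  define b' where "b' = chord_end P a'"
  define c' where "c' = chord_end Q b'"
  note abc = closing_vertex_triangle[OF P Q R a, folded b_def, folded c_def]
  note abc' = closing_vertex_triangle[OF P Q R a', folded b'_def, folded c'_def]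
  have T: "{a', b', c'} = {a, b, c}"
    using eq unfolding chord_triangle_def b_def c_def b'_def c'_def ..
  have "a' \<noteq> b"
  proof
    assume "a' = b"
    then have "b' = a" unfolding b'_def b_def using chord_end_chord_end[OF abc(1) P] by simp
    moreover have "c' \<in> {a, b, c}" using T by blast
    ultimately have "c' = c" using abc'(6,7) \<open>a' = b\<close> by blast
    then have "chord_end Q a = chord_end Q b" unfolding c_def c'_def \<open>b' = a\<close> .
    then show False using chord_end_inject[OF abc(1,2) Q] abc(5) by blast
  qed
  moreover have "a' \<noteq> c"
  proof
    assume "a' = c"
    have "b' \<in> {a, b, c}" using T by blast
    then consider "chord_end P c = a" | "chord_end P c = chord_end P a"
      using abc'(5) \<open>a' = c\<close> unfolding b'_def b_def by blast
    then show False
    proof cases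
      case 1
      then show False using chord_end_eq_swap[OF abc(3,1) P] abc(6) unfolding b_def by simp
    next
      case 2
      then show False using chord_end_inject[OF abc(3,1) P] abc(7) by blast
    qed
  qed
  moreover have "a' \<in> {a, b, c}" using T by blast
  ultimately show "a = a'" by blast
qed

lemma card_circle_inter_vertical_line:
  fixes m :: real
  shows "finite {w. cmod w = 1 \<and> Re w = m} \<and>
    card {w. cmod w = 1 \<and> Re w = m} = (if m\<^sup>2 < 1 then 2 else if m\<^sup>2 = 1 then 1 else 0)"
proof -
  have S: "{w. cmod w = 1 \<and> Re w = m} = {w. Re w = m \<and> (Im w)\<^sup>2 = 1 - m\<^sup>2}"
    by (auto simp: cmod_def)
  consider "m\<^sup>2 < 1" | "m\<^sup>2 = 1" | "m\<^sup>2 > 1" by linarith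
  then show ?thesis
  proof cases
    case 1
    define s where "s = sqrt (1 - m\<^sup>2)"
    have s: "s > 0" "s\<^sup>2 = 1 - m\<^sup>2" unfolding s_def using 1 by simp_all
    have "{w. Re w = m \<and> (Im w)\<^sup>2 = 1 - m\<^sup>2} = {Complex m s, Complex m (-s)}"
    proof (intro set_eqI iffI)
      fix w assume "w \<in> {w. Re w = m \<and> (Im w)\<^sup>2 = 1 - m\<^sup>2}"
      then have "Re w = m" "(Im w)\<^sup>2 = s\<^sup>2" using s(2) by auto
      then have "Re w = m" "Im w = s \<or> Im w = -s" using power2_eq_iff by blast+
      then show "w \<in> {Complex m s, Complex m (-s)}" by (auto simp: complex_eq_iff)
    qed (use s(2) in auto)
    moreover have "Complex m s \<noteq> Complex m (-s)" using s(1) by simp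
    ultimately show ?thesis unfolding S using 1 by simp
  next
    case 2
    then have "{w. Re w = m \<and> (Im w)\<^sup>2 = 1 - m\<^sup>2} = {Complex m 0}"
      by (auto simp: complex_eq_iff)
    then show ?thesis unfolding S using 2 by simp
  next
    case 3
    have "(Im w)\<^sup>2 \<noteq> 1 - m\<^sup>2" for w using 3 zero_le_power2[of "Im w"] by linarith
    then have empty: "{w. Re w = m \<and> (Im w)\<^sup>2 = 1 - m\<^sup>2} = {}" by blast
    show ?thesis unfolding S empty using 3 by simp
  qed
qed

lemma circle_inter_line_eq_image:
  fixes \<beta> :: complex and k :: real
  assumes "\<beta> \<noteq> 0"
  shows "{z. cmod z = 1 \<and> Re (cnj \<beta> * z) = k} = (\<lambda>w. sgn \<beta> * w) ` {w. cmod w = 1 \<and> Re w = k / cmod \<beta>}"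
proof -
  define r where "r = cmod \<beta>"
  define e where "e = sgn \<beta>"
  have r: "r > 0" unfolding r_def using assms by simp
  have e1: "cmod e = 1" unfolding e_def using assms by (simp add: norm_sgn)
  have "cnj \<beta> * e = of_real ((cmod \<beta>)\<^sup>2 / cmod \<beta>)"
    unfolding e_def sgn_div_norm scaleR_conv_of_real complex_norm_square
    using complex_norm_square[of \<beta>] by (simp add: field_simps)
  then have e: "e * cnj e = 1" "cnj \<beta> * e = of_real r" "cmod e = 1"
    using cmod_eq_1_imp_mult_cnj[OF e1] e1 unfolding r_def by (simp_all add: power2_eq_square)
  have Re_rotate: "Re (cnj \<beta> * (e * w)) = r * Re w" for w
    using e(2) by (metis mult.assoc scaleR_complex.sel(1) scaleR_conv_of_real)
  show ?thesis unfolding e_def[symmetric] r_def[symmetric]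
  proof (intro set_eqI iffI)
    fix z assume z: "z \<in> {z. cmod z = 1 \<and> Re (cnj \<beta> * z) = k}"
    have z_eq: "z = e * (cnj e * z)" using e(1) by (simp add: mult.assoc[symmetric])
    have "Re (cnj \<beta> * z) = r * Re (cnj e * z)" using Re_rotate[of "cnj e * z"] unfolding z_eq[symmetric] .
    then have "Re (cnj e * z) = k / r" using z r by (simp add: eq_divide_eq mult.commute)
    then show "z \<in> (\<lambda>w. e * w) ` {w. cmod w = 1 \<and> Re w = k / r}"
      using z e(3) z_eq by (intro image_eqI[of _ _ "cnj e * z"]) (auto simp: norm_mult)
  next
    fix z assume "z \<in> (\<lambda>w. e * w) ` {w. cmod w = 1 \<and> Re w = k / r}"
    then obtain w where "cmod w = 1" "Re w = k / r" "z = e * w" by blast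
    then show "z \<in> {z. cmod z = 1 \<and> Re (cnj \<beta> * z) = k}"
      using Re_rotate[of w] e(3) r by (simp add: norm_mult)
  qed
qed

lemma card_circle_inter_line:
  fixes \<beta> :: complex and k :: real
  assumes "\<beta> \<noteq> 0"
  shows "finite {z. cmod z = 1 \<and> Re (cnj \<beta> * z) = k} \<and>
    card {z. cmod z = 1 \<and> Re (cnj \<beta> * z) = k} =
      (if k\<^sup>2 < (cmod \<beta>)\<^sup>2 then 2 else if k\<^sup>2 = (cmod \<beta>)\<^sup>2 then 1 else 0)"
proof -
  have "inj_on (\<lambda>w. sgn \<beta> * w) {w. cmod w = 1 \<and> Re w = k / cmod \<beta>}"
    using assms by (intro inj_onI) (simp add: sgn_zero_iff)
  moreover have "(k / cmod \<beta>)\<^sup>2 < 1 \<longleftrightarrow> k\<^sup>2 < (cmod \<beta>)\<^sup>2"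
    and "(k / cmod \<beta>)\<^sup>2 = 1 \<longleftrightarrow> k\<^sup>2 = (cmod \<beta>)\<^sup>2"
    using assms by (simp_all add: power_divide divide_less_eq divide_eq_eq)
  ultimately show ?thesis
    unfolding circle_inter_line_eq_image[OF assms]
    using card_circle_inter_vertical_line[of "k / cmod \<beta>"] by (simp add: card_image)
qed

definition twice_signed_area :: "complex \<Rightarrow> complex \<Rightarrow> complex \<Rightarrow> real" where
  "twice_signed_area P Q R = Im (Q * cnj P) + Im (R * cnj Q) - Im (R * cnj P)"

definition cycle_alpha :: "complex \<Rightarrow> complex \<Rightarrow> complex \<Rightarrow> complex" where
  "cycle_alpha P Q R = -1 + Q * cnj P + R * cnj Q - R * cnj P"

definition cycle_beta :: "complex \<Rightarrow> complex \<Rightarrow> complex \<Rightarrow> complex" where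
  "cycle_beta P Q R = P - Q + R - R * cnj Q * P"

lemma Im_cycle_alpha: "Im (cycle_alpha P Q R) = twice_signed_area P Q R"
  unfolding cycle_alpha_def twice_signed_area_def by simp

lemma chord_end_divide:
  assumes "d \<noteq> 0" "d - cnj Q * n \<noteq> 0"
  shows "chord_end Q (n / d) = (Q * d - n) / (d - cnj Q * n)"
proof -
  have "1 - cnj Q * (n / d) = (d - cnj Q * n) / d" "Q - n / d = (Q * d - n) / d"
    using assms by (simp_all add: field_simps)
  then show ?thesis unfolding chord_end_def using assms by simp
qed

lemma closing_vertex_iff_quadratic:
  assumes P: "cmod P < 1" and Q: "cmod Q < 1" and R: "cmod R < 1" and z: "cmod z = 1"
  defines "\<alpha> \<equiv> cycle_alpha P Q R" and "\<beta> \<equiv> cycle_beta P Q R"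
  shows "chord_end R (chord_end Q (chord_end P z)) = z \<longleftrightarrow>
    cnj \<beta> * z\<^sup>2 + (\<alpha> + cnj \<alpha>) * z + \<beta> = 0"
proof -
  define d where "d = 1 - cnj R * z"
  define n where "n = R - z"
  have Pz: "cmod (chord_end P z) = 1" and Rz: "cmod (chord_end R z) = 1"
    using norm_chord_end z P R by auto
  have d: "d \<noteq> 0" unfolding d_def by (rule chord_end_denom_nonzero[OF z R])
  have "d - cnj Q * n = d * (1 - cnj Q * chord_end R z)"
    using d unfolding chord_end_def n_def d_def by (simp add: field_simps)
  then have dn: "d - cnj Q * n \<noteq> 0" using d chord_end_denom_nonzero[OF Rz Q] by simp
  have "chord_end R (chord_end Q (chord_end P z)) = z \<longleftrightarrow> chord_end P z = chord_end Q (chord_end R z)"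
    using chord_end_eq_swap norm_chord_end z P Q R by metis
  also have "\<dots> \<longleftrightarrow> (P - z) * (d - cnj Q * n) = (Q * d - n) * (1 - cnj P * z)"
  proof -
    have "chord_end R z = n / d" unfolding chord_end_def n_def d_def ..
    then have "chord_end Q (chord_end R z) = (Q * d - n) / (d - cnj Q * n)"
      using chord_end_divide[OF d dn] by simp
    then show ?thesis
      using chord_end_denom_nonzero[OF z P] dn by (simp add: frac_eq_eq chord_end_def)
  qed
  also have "\<dots> \<longleftrightarrow> cnj \<beta> * z\<^sup>2 + (\<alpha> + cnj \<alpha>) * z + \<beta> = 0"
    unfolding \<alpha>_def \<beta>_def cycle_alpha_def cycle_beta_def d_def n_def
    by (simp add: algebra_simps power2_eq_square eq_iff_diff_eq_0[of "(P - z) * _"])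
  finally show ?thesis .
qed

lemma closing_vertices_eq_circle_inter_line:
  assumes "cmod P < 1" "cmod Q < 1" "cmod R < 1"
  shows "closing_vertices P Q R =
    {z. cmod z = 1 \<and> Re (cnj (cycle_beta P Q R) * z) = - Re (cycle_alpha P Q R)}"
proof (intro set_eqI)
  fix z
  define \<alpha> where "\<alpha> = cycle_alpha P Q R"
  define \<beta> where "\<beta> = cycle_beta P Q R"
  show "z \<in> closing_vertices P Q R \<longleftrightarrow>
    z \<in> {z. cmod z = 1 \<and> Re (cnj (cycle_beta P Q R) * z) = - Re (cycle_alpha P Q R)}"
  proof (cases "cmod z = 1")
    case z: True
    have "z * (\<beta> * cnj z) = \<beta>" using cmod_eq_1_imp_mult_cnj[OF z] by (simp add: mult.left_commute)
    then have "cnj \<beta> * z\<^sup>2 + (\<alpha> + cnj \<alpha>) * z + \<beta> =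
        z * ((cnj \<beta> * z + cnj (cnj \<beta> * z)) + (\<alpha> + cnj \<alpha>))"
      by (simp add: algebra_simps power2_eq_square)
    also have "\<dots> = z * of_real (2 * Re (cnj \<beta> * z) + 2 * Re \<alpha>)"
      using complex_add_cnj[of "cnj \<beta> * z"] complex_add_cnj[of \<alpha>] by simp
    finally have quadratic_eq: "cnj \<beta> * z\<^sup>2 + (\<alpha> + cnj \<alpha>) * z + \<beta> =
      z * of_real (2 * Re (cnj \<beta> * z) + 2 * Re \<alpha>)" .
    have z_mult: "z * complex_of_real x = 0 \<longleftrightarrow> x = 0" for x using z by auto
    have "cnj \<beta> * z\<^sup>2 + (\<alpha> + cnj \<alpha>) * z + \<beta> = 0 \<longleftrightarrow> Re (cnj \<beta> * z) = - Re \<alpha>"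
      unfolding quadratic_eq z_mult by linarith
    then show ?thesis
      using closing_vertex_iff_quadratic[OF assms z] z
      unfolding closing_vertices_def \<alpha>_def \<beta>_def by simp
  qed (simp add: closing_vertices_def)
qed

lemma norm_cycle_beta_squared:
  "(cmod (cycle_beta P Q R))\<^sup>2 =
    (cmod (cycle_alpha P Q R))\<^sup>2 - (1 - (cmod P)\<^sup>2) * (1 - (cmod Q)\<^sup>2) * (1 - (cmod R)\<^sup>2)"
proof -
  have "cycle_beta P Q R * cnj (cycle_beta P Q R) =
    cycle_alpha P Q R * cnj (cycle_alpha P Q R) - (1 - P * cnj P) * (1 - Q * cnj Q) * (1 - R * cnj R)"
    unfolding cycle_alpha_def cycle_beta_def by (simp add: algebra_simps)
  then have "complex_of_real ((cmod (cycle_beta P Q R))\<^sup>2) = complex_of_real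
    ((cmod (cycle_alpha P Q R))\<^sup>2 - (1 - (cmod P)\<^sup>2) * (1 - (cmod Q)\<^sup>2) * (1 - (cmod R)\<^sup>2))"
    by (simp flip: complex_norm_square)
  then show ?thesis using of_real_eq_iff by blast
qed

lemma cycle_beta_eq_0_imp_Re_cycle_alpha_neq_0:
  assumes P: "cmod P < 1" and Q: "cmod Q < 1" and "cycle_beta P Q R = 0"
  shows "Re (cycle_alpha P Q R) \<noteq> 0"
proof -
  define w where "w = 1 - cnj Q * P"
  define r where "r = - (1 - (cmod P)\<^sup>2) * (1 - (cmod Q)\<^sup>2)"
  have "R - R * cnj Q * P = Q - P" using assms(3) unfolding cycle_beta_def by algebra
  moreover have "cycle_alpha P Q R * w =
    (-1 + Q * cnj P) * (1 - cnj Q * P) + (cnj Q - cnj P) * (R - R * cnj Q * P)"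
    unfolding cycle_alpha_def w_def by (simp add: algebra_simps)
  ultimately have "cycle_alpha P Q R * w = (-1 + Q * cnj P) * (1 - cnj Q * P) + (cnj Q - cnj P) * (Q - P)"
    by simp
  also have "\<dots> = - ((1 - P * cnj P) * (1 - Q * cnj Q))" by (simp add: algebra_simps)
  also have "\<dots> = of_real r"
    unfolding r_def complex_norm_square[symmetric] by (simp add: algebra_simps)
  finally have "cycle_alpha P Q R * of_real ((cmod w)\<^sup>2) = of_real r * cnj w"
    by (metis complex_norm_square mult.assoc)
  from arg_cong[OF this, of Re] have "Re (cycle_alpha P Q R) * (cmod w)\<^sup>2 = r * Re w"
    by simp
  moreover have "r < 0"
    using cmod_sq_less_1[OF P] cmod_sq_less_1[OF Q] unfolding r_def by (simp add: mult_neg_pos)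
  moreover have "Re w > 0"
    using Re_cnj_mult_less_1[OF Q, of P] P unfolding w_def by simp
  ultimately have "Re (cycle_alpha P Q R) * (cmod w)\<^sup>2 < 0" by (simp add: mult_neg_pos)
  then show ?thesis by auto
qed

lemma card_closing_vertices:
  assumes P: "cmod P < 1" and Q: "cmod Q < 1" and R: "cmod R < 1"
  defines "A \<equiv> twice_signed_area P Q R"
    and "D \<equiv> (1 - (cmod P)\<^sup>2) * (1 - (cmod Q)\<^sup>2) * (1 - (cmod R)\<^sup>2)"
  shows "finite (closing_vertices P Q R) \<and>
    card (closing_vertices P Q R) = (if A\<^sup>2 < D then 0 else if A\<^sup>2 = D then 1 else 2)"
proof -
  define \<alpha> where "\<alpha> = cycle_alpha P Q R"
  define \<beta> where "\<beta> = cycle_beta P Q R"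
  have vertices: "closing_vertices P Q R = {z. cmod z = 1 \<and> Re (cnj \<beta> * z) = - Re \<alpha>}"
    unfolding \<alpha>_def \<beta>_def by (rule closing_vertices_eq_circle_inter_line[OF P Q R])
  have norm_\<beta>: "(cmod \<beta>)\<^sup>2 = (Re \<alpha>)\<^sup>2 + A\<^sup>2 - D"
    using norm_cycle_beta_squared[of P Q R] Im_cycle_alpha[of P Q R]
    unfolding \<alpha>_def \<beta>_def A_def D_def by (simp add: cmod_power2)
  show ?thesis
  proof (cases "\<beta> = 0")
    case False
    then show ?thesis
      using card_circle_inter_line[OF False, of "- Re \<alpha>"] unfolding vertices norm_\<beta> by auto
  next
    case True
    then have "Re \<alpha> \<noteq> 0"
      using cycle_beta_eq_0_imp_Re_cycle_alpha_neq_0[OF P Q] unfolding \<alpha>_def \<beta>_def by blast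
    then have "(Re \<alpha>)\<^sup>2 > 0" by simp
    moreover have "(cmod \<beta>)\<^sup>2 = 0" using True by simp
    ultimately have "A\<^sup>2 < D" using norm_\<beta> by linarith
    moreover have "closing_vertices P Q R = {}" using \<open>Re \<alpha> \<noteq> 0\<close> True unfolding vertices by auto
    ultimately show ?thesis by simp
  qed
qed

lemma card_circumscribing_inscribed_triangles:
  assumes P: "cmod P < 1" and Q: "cmod Q < 1" and R: "cmod R < 1"
  defines "A \<equiv> twice_signed_area P Q R"
    and "D \<equiv> (1 - (cmod P)\<^sup>2) * (1 - (cmod Q)\<^sup>2) * (1 - (cmod R)\<^sup>2)"
  shows "finite (circumscribing_inscribed_triangles P Q R) \<and>
    card (circumscribing_inscribed_triangles P Q R) = (if A\<^sup>2 < D then 0 else if A\<^sup>2 = D then 1 else 2)"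
  using card_closing_vertices[OF P Q R] inj_on_chord_triangle[OF P Q R]
  unfolding circumscribing_inscribed_triangles_eq[OF P Q R] A_def D_def
  by (simp add: card_image)

section \<open>Hyperbolic distances in the Klein disk\<close>

lemma one_minus_norm_sq_scaled:
  fixes a b s :: real
  assumes "s > 0" "s\<^sup>2 = 1 - a\<^sup>2 - b\<^sup>2"
  shows "1 - ((a / (1 + s))\<^sup>2 + (b / (1 + s))\<^sup>2) = 2 * s / (1 + s)"
proof -
  have "a\<^sup>2 + b\<^sup>2 = (1 - s) * (1 + s)" using assms(2) by (simp add: algebra_simps power2_eq_square)
  then have "(a / (1 + s))\<^sup>2 + (b / (1 + s))\<^sup>2 = (1 - s) / (1 + s)"
    using assms(1) by (simp add: power_divide add_divide_distrib[symmetric] power2_eq_square)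
  then show ?thesis using assms(1) by (simp add: field_simps)
qed

lemma poincare_ratio_of_scaled_points:
  fixes a b c d s r :: real
  assumes s: "s > 0" "s\<^sup>2 = 1 - a\<^sup>2 - b\<^sup>2" and r: "r > 0" "r\<^sup>2 = 1 - c\<^sup>2 - d\<^sup>2"
  shows "1 + 2 * ((a / (1 + s) - c / (1 + r))\<^sup>2 + (b / (1 + s) - d / (1 + r))\<^sup>2) /
      ((1 - ((a / (1 + s))\<^sup>2 + (b / (1 + s))\<^sup>2)) * (1 - ((c / (1 + r))\<^sup>2 + (d / (1 + r))\<^sup>2)))
    = (1 - (a * c + b * d)) / (s * r)"
proof -
  have ne: "1 + s \<noteq> 0" "1 + r \<noteq> 0" using s r by auto
  have "(a / (1 + s) - c / (1 + r))\<^sup>2 + (b / (1 + s) - d / (1 + r))\<^sup>2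
      = ((a\<^sup>2 + b\<^sup>2) * (1 + r)\<^sup>2 + (c\<^sup>2 + d\<^sup>2) * (1 + s)\<^sup>2 - 2 * (a * c + b * d) * (1 + s) * (1 + r))
        / ((1 + s)\<^sup>2 * (1 + r)\<^sup>2)"
  proof -
    have "a / (1 + s) - c / (1 + r) = (a * (1 + r) - c * (1 + s)) / ((1 + s) * (1 + r))"
      and "b / (1 + s) - d / (1 + r) = (b * (1 + r) - d * (1 + s)) / ((1 + s) * (1 + r))"
      using ne by (simp_all add: field_simps)
    note differences = this
    show ?thesis unfolding differences power_divide add_divide_distrib[symmetric]
      by (simp add: algebra_simps power2_eq_square)
  qed
  also have "\<dots> = 2 * (1 - s * r - (a * c + b * d)) / ((1 + s) * (1 + r))"
  proof -
    have sums: "a\<^sup>2 + b\<^sup>2 = 1 - s\<^sup>2" "c\<^sup>2 + d\<^sup>2 = 1 - r\<^sup>2" using s r by auto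
    have "(a\<^sup>2 + b\<^sup>2) * (1 + r)\<^sup>2 + (c\<^sup>2 + d\<^sup>2) * (1 + s)\<^sup>2 - 2 * (a * c + b * d) * (1 + s) * (1 + r)
        = ((1 + s) * (1 + r)) * (2 * (1 - s * r - (a * c + b * d)))"
      unfolding sums by (simp add: algebra_simps power2_eq_square)
    then show ?thesis using ne by (simp add: power2_eq_square)
  qed
  finally have numerator: "(a / (1 + s) - c / (1 + r))\<^sup>2 + (b / (1 + s) - d / (1 + r))\<^sup>2 =
    2 * (1 - s * r - (a * c + b * d)) / ((1 + s) * (1 + r))" .
  have cancel: "2 * (2 * x / (u * v)) / ((2 * s / u) * (2 * r / v)) = x / (s * r)"
    if "u \<noteq> 0" "v \<noteq> 0" for u v x :: real
    using that s r by (simp add: field_simps)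
  show ?thesis
    unfolding numerator one_minus_norm_sq_scaled[OF s] one_minus_norm_sq_scaled[OF r] cancel[OF ne]
    using s r by (simp add: field_simps)
qed

definition klein_cosh :: "complex \<Rightarrow> complex \<Rightarrow> real" where
  "klein_cosh P Q = (1 - P \<bullet> Q) / (sqrt (1 - (cmod P)\<^sup>2) * sqrt (1 - (cmod Q)\<^sup>2))"

lemma klein_dist_eq_arcosh:
  assumes "cmod P < 1" "cmod Q < 1"
  shows "klein_dist P Q = arcosh (klein_cosh P Q)"
proof -
  define s where "s = sqrt (1 - (cmod P)\<^sup>2)"
  define r where "r = sqrt (1 - (cmod Q)\<^sup>2)"
  have s: "s > 0" "s\<^sup>2 = 1 - (Re P)\<^sup>2 - (Im P)\<^sup>2" and r: "r > 0" "r\<^sup>2 = 1 - (Re Q)\<^sup>2 - (Im Q)\<^sup>2"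
    using assms unfolding s_def r_def by (simp_all add: cmod_power2 cmod_less_1_iff)
  have "G_inv P = P / complex_of_real (1 + s)" "G_inv Q = Q / complex_of_real (1 + r)"
    unfolding G_inv_def s_def r_def by simp_all
  then have "1 + 2 * (cmod (G_inv P - G_inv Q))\<^sup>2 / ((1 - (cmod (G_inv P))\<^sup>2) * (1 - (cmod (G_inv Q))\<^sup>2))
      = (1 - P \<bullet> Q) / (s * r)"
    using poincare_ratio_of_scaled_points[OF s r] by (simp add: cmod_power2 inner_complex_def)
  then show ?thesis unfolding klein_dist_def poincare_dist_def klein_cosh_def s_def r_def by simp
qed

lemma klein_cosh_gt_1:
  assumes P: "cmod P < 1" and Q: "cmod Q < 1" and "P \<noteq> Q"
  shows "klein_cosh P Q > 1"
proof -
  define a where "a = 1 - (cmod P)\<^sup>2"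
  define b where "b = 1 - (cmod Q)\<^sup>2"
  define g where "g = 1 - P \<bullet> Q"
  have ab: "a > 0" "b > 0" using P Q unfolding a_def b_def by (simp_all add: cmod_power2 cmod_less_1_iff)
  have "g\<^sup>2 - a * b = (P \<bullet> (Q - P))\<^sup>2 + (cmod (Q - P))\<^sup>2 * a"
    unfolding a_def b_def g_def inner_complex_def cmod_power2 by (simp add: algebra_simps power2_eq_square)
  moreover have "(cmod (Q - P))\<^sup>2 * a > 0" using assms(3) ab(1) by simp
  ultimately have "a * b < g\<^sup>2" using zero_le_power2[of "P \<bullet> (Q - P)"] by linarith
  moreover have "g > 0" using inner_less_1[of P Q] P Q unfolding g_def by simp
  ultimately have "sqrt (a * b) < g" using real_sqrt_less_mono[of "a * b" "g\<^sup>2"] by simp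
  then show ?thesis
    using ab unfolding klein_cosh_def a_def[symmetric] b_def[symmetric] g_def[symmetric]
    by (simp add: real_sqrt_mult)
qed

lemma quadratic_ratio_min:
  fixes g h :: "real \<Rightarrow> real" and K M L g0 g1 h0 h1 :: real
  assumes g: "\<And>t. g t = g0 - t * g1" and h: "\<And>t. h t = h0 - 2 * t * h1 - t\<^sup>2 * L"
    and K: "K = h1\<^sup>2 + L * h0" "K > 0" and M: "M = L * g0\<^sup>2 + 2 * g0 * g1 * h1 - g1\<^sup>2 * h0" "M > 0"
    and "L > 0" and g_pos: "\<And>t. h t \<ge> 0 \<Longrightarrow> g t > 0"
  shows "h t > 0 \<Longrightarrow> sqrt (M / K) \<le> g t / sqrt (h t)"
    and "\<exists>t. h t > 0 \<and> g t / sqrt (h t) = sqrt (M / K)"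
proof -
  define a where "a = K * g1\<^sup>2 + M * L"
  have a: "a > 0" unfolding a_def using K M \<open>L > 0\<close> by (simp add: add_nonneg_pos)
  \<comment> \<open>\<open>K g\<^sup>2 - M h\<close> is a quadratic in \<open>t\<close> with vanishing discriminant.\<close>
  have square: "4 * a * (K * (g t)\<^sup>2 - M * h t) = (2 * a * t + 2 * (M * h1 - K * g0 * g1))\<^sup>2" for t
    unfolding g h a_def K(1) M(1) by algebra
  have ratio: "g t / sqrt (h t) = sqrt ((g t)\<^sup>2 / h t)" if "h t > 0" for t
    using g_pos[of t] that by (simp add: real_sqrt_divide)
  have "M / K \<le> (g t)\<^sup>2 / h t" if "h t > 0" for t
  proof -
    have "0 \<le> 4 * a * (K * (g t)\<^sup>2 - M * h t)" unfolding square by simp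
    then have "M * h t \<le> K * (g t)\<^sup>2" using a by (simp add: zero_le_mult_iff)
    then show ?thesis using K(2) that by (simp add: field_simps)
  qed
  then show "h t > 0 \<Longrightarrow> sqrt (M / K) \<le> g t / sqrt (h t)" by (simp add: ratio)
  define t0 where "t0 = - (M * h1 - K * g0 * g1) / a"
  have "4 * a * (K * (g t0)\<^sup>2 - M * h t0) = 0" unfolding square t0_def using a by simp
  then have eq: "K * (g t0)\<^sup>2 = M * h t0" using a by simp
  then have "h t0 \<ge> 0" using K(2) M(2) by (metis zero_le_power2 zero_le_mult_iff not_le less_imp_le)
  then have "g t0 > 0" by (rule g_pos)
  then have "M * h t0 > 0" unfolding eq[symmetric] using K(2) by simp
  then have "h t0 > 0" using M(2) by (simp add: zero_less_mult_iff)
  moreover have "(g t0)\<^sup>2 / h t0 = M / K" using eq K(2) \<open>h t0 > 0\<close> by (simp add: field_simps)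
  ultimately show "\<exists>t. h t > 0 \<and> g t / sqrt (h t) = sqrt (M / K)" using ratio by metis
qed

lemma line_parameter_identities:
  fixes P Q R :: complex and t :: real
  defines "g0 \<equiv> 1 - R \<bullet> P" and "g1 \<equiv> R \<bullet> (Q - P)"
    and "h0 \<equiv> 1 - (cmod P)\<^sup>2" and "h1 \<equiv> P \<bullet> (Q - P)" and "L \<equiv> (cmod (Q - P))\<^sup>2"
  shows "1 - R \<bullet> (P + t *\<^sub>R (Q - P)) = g0 - t * g1"
    and "1 - (cmod (P + t *\<^sub>R (Q - P)))\<^sup>2 = h0 - 2 * t * h1 - t\<^sup>2 * L"
    and "(1 - P \<bullet> Q)\<^sup>2 - (1 - (cmod P)\<^sup>2) * (1 - (cmod Q)\<^sup>2) = h1\<^sup>2 + L * h0"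
    and "(1 - (cmod R)\<^sup>2) * ((1 - P \<bullet> Q)\<^sup>2 - (1 - (cmod P)\<^sup>2) * (1 - (cmod Q)\<^sup>2))
        + (twice_signed_area P Q R)\<^sup>2 = L * g0\<^sup>2 + 2 * g0 * g1 * h1 - g1\<^sup>2 * h0"
  unfolding assms twice_signed_area_def inner_complex_def cmod_power2
  by (simp_all add: algebra_simps power2_eq_square)

lemma klein_cosh_on_line_min:
  assumes P: "cmod P < 1" and Q: "cmod Q < 1" and R: "cmod R < 1" and "P \<noteq> Q"
  defines "K \<equiv> (1 - P \<bullet> Q)\<^sup>2 - (1 - (cmod P)\<^sup>2) * (1 - (cmod Q)\<^sup>2)"
    and "\<rho> \<equiv> 1 - (cmod R)\<^sup>2" and "A \<equiv> twice_signed_area P Q R"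
  defines "C \<equiv> sqrt ((\<rho> * K + A\<^sup>2) / (\<rho> * K))"
  shows "K > 0"
    and "\<And>t. cmod (P + t *\<^sub>R (Q - P)) < 1 \<Longrightarrow> C \<le> klein_cosh R (P + t *\<^sub>R (Q - P))"
    and "\<exists>t. cmod (P + t *\<^sub>R (Q - P)) < 1 \<and> klein_cosh R (P + t *\<^sub>R (Q - P)) = C"
proof -
  define S where "S t = P + t *\<^sub>R (Q - P)" for t
  define g where "g t = 1 - R \<bullet> S t" for t
  define h where "h t = 1 - (cmod (S t))\<^sup>2" for t
  define M where "M = \<rho> * K + A\<^sup>2"
  have g_eq: "g t = 1 - R \<bullet> P - t * (R \<bullet> (Q - P))" for t
    unfolding g_def S_def by (rule line_parameter_identities(1))
  have h_eq: "h t = 1 - (cmod P)\<^sup>2 - 2 * t * (P \<bullet> (Q - P)) - t\<^sup>2 * (cmod (Q - P))\<^sup>2" for t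
    unfolding h_def S_def by (rule line_parameter_identities(2))
  note K_eq = line_parameter_identities(3)[where P=P and Q=Q, folded K_def]
  note M_eq = line_parameter_identities(4)[where P=P and Q=Q and R=R,
      folded K_def \<rho>_def A_def, folded M_def]
  have pos: "1 - (cmod P)\<^sup>2 > 0" "\<rho> > 0" "(cmod (Q - P))\<^sup>2 > 0"
    using cmod_sq_less_1[OF P] cmod_sq_less_1[OF R] \<open>P \<noteq> Q\<close> unfolding \<rho>_def by simp_all
  show K: "K > 0" unfolding K_eq using pos by (simp add: add_nonneg_pos)
  have M: "M > 0" unfolding M_def using K pos by (simp add: add_pos_nonneg)
  have in_disk: "cmod (S t) < 1 \<longleftrightarrow> h t > 0" for t
    unfolding h_def using abs_square_less_1[of "cmod (S t)"] by auto
  have g_pos: "g t > 0" if "h t \<ge> 0" for t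
  proof -
    have "(cmod (S t))\<^sup>2 \<le> 1\<^sup>2" using that unfolding h_def by simp
    then have "cmod (S t) \<le> 1" by (rule power2_le_imp_le) simp
    then show ?thesis using inner_less_1[OF R, of "S t"] unfolding g_def by simp
  qed
  note ratio_min = quadratic_ratio_min[OF g_eq h_eq K_eq K M_eq M pos(3) g_pos]
  have klein_cosh_S: "klein_cosh R (S t) = g t / sqrt (h t) / sqrt \<rho>" for t
    unfolding klein_cosh_def g_def h_def \<rho>_def by simp
  have C_eq: "C = sqrt (M / K) / sqrt \<rho>"
    unfolding C_def M_def[symmetric] using pos by (simp add: real_sqrt_divide real_sqrt_mult)
  show "C \<le> klein_cosh R (P + t *\<^sub>R (Q - P))" if "cmod (P + t *\<^sub>R (Q - P)) < 1" for t
  proof -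
    have "sqrt (M / K) \<le> g t / sqrt (h t)" using ratio_min(1) that in_disk unfolding S_def by blast
    then have "sqrt (M / K) / sqrt \<rho> \<le> g t / sqrt (h t) / sqrt \<rho>"
      by (rule divide_right_mono) (simp add: less_imp_le[OF pos(2)])
    then show ?thesis unfolding C_eq klein_cosh_S[symmetric] S_def .
  qed
  obtain t where "h t > 0" "g t / sqrt (h t) = sqrt (M / K)" using ratio_min(2) by blast
  then show "\<exists>t. cmod (P + t *\<^sub>R (Q - P)) < 1 \<and> klein_cosh R (P + t *\<^sub>R (Q - P)) = C"
    using in_disk[of t] klein_cosh_S[of t] unfolding C_eq S_def by auto
qed

lemma delta_dist_eq_arcosh:
  assumes P: "cmod P < 1" and Q: "cmod Q < 1" and R: "cmod R < 1" and "P \<noteq> Q"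
  defines "K \<equiv> (1 - P \<bullet> Q)\<^sup>2 - (1 - (cmod P)\<^sup>2) * (1 - (cmod Q)\<^sup>2)"
    and "\<rho> \<equiv> 1 - (cmod R)\<^sup>2" and "A \<equiv> twice_signed_area P Q R"
  shows "delta_dist P Q R = arcosh (sqrt ((\<rho> * K + A\<^sup>2) / (\<rho> * K)))"
proof -
  define C where "C = sqrt ((\<rho> * K + A\<^sup>2) / (\<rho> * K))"
  note line_min = klein_cosh_on_line_min[OF assms(1-4), folded K_def \<rho>_def A_def, folded C_def]
  have "\<rho> > 0" using cmod_sq_less_1[OF R] unfolding \<rho>_def by simp
  then have C: "C \<ge> 1" unfolding C_def using line_min(1) by simp
  have "Inf {klein_dist R S | S. S \<in> klein_disk \<and> (\<exists>t::real. S = P + t *\<^sub>R (Q - P))} = arcosh C"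
  proof (rule cInf_eq_minimum)
    obtain t where "cmod (P + t *\<^sub>R (Q - P)) < 1" "klein_cosh R (P + t *\<^sub>R (Q - P)) = C"
      using line_min(3) by blast
    then show "arcosh C \<in> {klein_dist R S | S. S \<in> klein_disk \<and> (\<exists>t::real. S = P + t *\<^sub>R (Q - P))}"
      using klein_dist_eq_arcosh[OF R] unfolding klein_disk_def by force
  next
    fix x assume "x \<in> {klein_dist R S | S. S \<in> klein_disk \<and> (\<exists>t::real. S = P + t *\<^sub>R (Q - P))}"
    then obtain t where S: "cmod (P + t *\<^sub>R (Q - P)) < 1" "x = klein_dist R (P + t *\<^sub>R (Q - P))"
      unfolding klein_disk_def by auto
    have "C \<le> klein_cosh R (P + t *\<^sub>R (Q - P))" using line_min(2)[OF S(1)] .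
    then show "arcosh C \<le> x"
      unfolding S(2) klein_dist_eq_arcosh[OF R S(1)] using C arcosh_less_iff_real
      by (metis order.trans not_le)
  qed
  then show ?thesis unfolding delta_dist_def C_def .
qed

lemma cosh_ln_coth:
  fixes d :: real
  assumes "d > 0"
  shows "cosh (ln ((exp d + 1) / (exp d - 1))) = cosh d / sinh d"
proof -
  define E where "E = exp d"
  have E: "E > 1" unfolding E_def using assms by simp
  have "cosh (ln ((E + 1) / (E - 1))) = ((E + 1) / (E - 1) + (E - 1) / (E + 1)) / 2"
    using E by (simp add: cosh_ln_real)
  also have "\<dots> = (E + inverse E) / (E - inverse E)"
  proof -
    have "E * E - 1 > 0" using E by (metis less_1_mult diff_gt_0_iff_gt)
    then show ?thesis using E by (simp add: field_simps)
  qed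
  also have "\<dots> = cosh d / sinh d"
    unfolding E_def cosh_field_def sinh_field_def exp_minus by (simp add: field_split_simps)
  finally show ?thesis unfolding E_def .
qed

lemma cosh_Delta':
  assumes P: "cmod P < 1" and Q: "cmod Q < 1" and "P \<noteq> Q"
  defines "K \<equiv> (1 - P \<bullet> Q)\<^sup>2 - (1 - (cmod P)\<^sup>2) * (1 - (cmod Q)\<^sup>2)"
  shows "Delta' P Q \<ge> 0" and "cosh (Delta' P Q) = sqrt ((1 - P \<bullet> Q)\<^sup>2 / K)"
proof -
  define a where "a = 1 - (cmod P)\<^sup>2"
  define b where "b = 1 - (cmod Q)\<^sup>2"
  define c where "c = klein_cosh P Q"
  define d where "d = arcosh c"
  have ab: "a > 0" "b > 0" using cmod_sq_less_1[OF P] cmod_sq_less_1[OF Q] unfolding a_def b_def by simp_all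
  have c: "c > 1" unfolding c_def by (rule klein_cosh_gt_1[OF assms(1-3)])
  have d: "d > 0" unfolding d_def using c by simp
  have Delta'_eq: "Delta' P Q = ln ((exp d + 1) / (exp d - 1))"
    unfolding Delta'_def d_def c_def klein_dist_eq_arcosh[OF P Q] ..
  have "exp d > 1" using d by simp
  then show "Delta' P Q \<ge> 0" unfolding Delta'_eq by simp
  have c_sq: "c\<^sup>2 = (1 - P \<bullet> Q)\<^sup>2 / (a * b)"
    unfolding c_def klein_cosh_def a_def[symmetric] b_def[symmetric] using ab
    by (simp add: power_divide power_mult_distrib real_sqrt_mult[symmetric])
  then have "c\<^sup>2 - 1 = K / (a * b)"
    unfolding K_def a_def[symmetric] b_def[symmetric] using ab by (simp add: diff_divide_distrib)
  then have ratio: "c\<^sup>2 / (c\<^sup>2 - 1) = (1 - P \<bullet> Q)\<^sup>2 / K"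
    unfolding c_sq using ab by simp
  have "cosh (Delta' P Q) = c / sqrt (c\<^sup>2 - 1)"
    unfolding Delta'_eq cosh_ln_coth[OF d] using c by (simp add: d_def sinh_arcosh_real)
  also have "\<dots> = sqrt (c\<^sup>2 / (c\<^sup>2 - 1))" using c by (simp add: real_sqrt_divide)
  finally show "cosh (Delta' P Q) = sqrt ((1 - P \<bullet> Q)\<^sup>2 / K)" unfolding ratio .
qed

lemma delta_dist_compare_Delta':
  assumes P: "cmod P < 1" and Q: "cmod Q < 1" and R: "cmod R < 1" and "P \<noteq> Q"
  defines "A \<equiv> twice_signed_area P Q R"
    and "D \<equiv> (1 - (cmod P)\<^sup>2) * (1 - (cmod Q)\<^sup>2) * (1 - (cmod R)\<^sup>2)"
  shows "delta_dist P Q R < Delta' P Q \<longleftrightarrow> A\<^sup>2 < D"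
    and "delta_dist P Q R = Delta' P Q \<longleftrightarrow> A\<^sup>2 = D"
proof -
  define K where "K = (1 - P \<bullet> Q)\<^sup>2 - (1 - (cmod P)\<^sup>2) * (1 - (cmod Q)\<^sup>2)"
  define \<rho> where "\<rho> = 1 - (cmod R)\<^sup>2"
  define X where "X = (\<rho> * K + A\<^sup>2) / (\<rho> * K)"
  define Y where "Y = (1 - P \<bullet> Q)\<^sup>2 / K"
  have K: "K > 0" unfolding K_def using klein_cosh_on_line_min(1)[OF assms(1-4)] .
  have \<rho>: "\<rho> > 0" using cmod_sq_less_1[OF R] unfolding \<rho>_def by simp
  have X: "X \<ge> 1" unfolding X_def using K \<rho> by simp
  have \<delta>: "delta_dist P Q R = arcosh (sqrt X)"
    unfolding X_def \<rho>_def K_def A_def using delta_dist_eq_arcosh[OF assms(1-4)] .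
  have cosh_\<delta>: "cosh (delta_dist P Q R) = sqrt X" and \<delta>_nonneg: "delta_dist P Q R \<ge> 0"
    unfolding \<delta> using X by simp_all
  have cosh_\<Delta>: "cosh (Delta' P Q) = sqrt Y" and \<Delta>_nonneg: "Delta' P Q \<ge> 0"
    unfolding Y_def K_def using cosh_Delta'[OF P Q \<open>P \<noteq> Q\<close>] by simp_all
  have cosh_cmp: "delta_dist P Q R < Delta' P Q \<longleftrightarrow> X < Y"
    "delta_dist P Q R = Delta' P Q \<longleftrightarrow> X = Y"
    using cosh_real_nonneg_less_iff[OF \<delta>_nonneg \<Delta>_nonneg] cosh_real_nonneg_less_iff[OF \<Delta>_nonneg \<delta>_nonneg]
    unfolding cosh_\<delta> cosh_\<Delta> by (simp, metis real_sqrt_less_iff linorder_neq_iff)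
  have Y_eq: "Y = \<rho> * (1 - P \<bullet> Q)\<^sup>2 / (\<rho> * K)" unfolding Y_def using \<rho> by simp
  have D_eq: "D = \<rho> * (1 - P \<bullet> Q)\<^sup>2 - \<rho> * K" unfolding D_def K_def \<rho>_def by algebra
  have "X < Y \<longleftrightarrow> \<rho> * K + A\<^sup>2 < \<rho> * (1 - P \<bullet> Q)\<^sup>2"
    unfolding X_def Y_eq using mult_pos_pos[OF \<rho> K] by (subst divide_less_cancel) auto
  moreover have "X = Y \<longleftrightarrow> \<rho> * K + A\<^sup>2 = \<rho> * (1 - P \<bullet> Q)\<^sup>2"
    unfolding X_def Y_eq using K \<rho> by (subst divide_cancel_right) simp
  ultimately show "delta_dist P Q R < Delta' P Q \<longleftrightarrow> A\<^sup>2 < D"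
    and "delta_dist P Q R = Delta' P Q \<longleftrightarrow> A\<^sup>2 = D"
    unfolding cosh_cmp D_eq by linarith+
qed

theorem theorem3p1:
  fixes P Q R :: complex
  assumes "P \<in> klein_disk" and "Q \<in> klein_disk" and "R \<in> klein_disk"
    and "\<not> collinear {P, Q, R}"
  shows "finite (circumscribing_inscribed_triangles P Q R) \<and>
         card (circumscribing_inscribed_triangles P Q R) =
           (if delta_dist P Q R < Delta' P Q then 0
            else if delta_dist P Q R = Delta' P Q then 1 else 2)"
proof -
  have P: "cmod P < 1" and Q: "cmod Q < 1" and R: "cmod R < 1"
    using assms(1-3) unfolding klein_disk_def by auto
  have "P \<noteq> Q" using assms(4) collinear_2 by fastforce
  show ?thesis
    using card_circumscribing_inscribed_triangles[OF P Q R] delta_dist_compare_Delta'[OF P Q R \<open>P \<noteq> Q\<close>]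
    by simp
qed

end
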